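(* For any finitely generated group $H$, the set $\mathcal E_H=\{G\in\mathcal G:\ H\text{ is embeddable into }\overline G\}$ is $F_\sigma$ in $\mathcal G$.
   Context: Let $\mathbb N=\{1,2,3,\dots\}$. Equip $\mathbb N^{\mathbb N\times\mathbb N}$ with the product topology of the discrete topology on $\mathbb N$. Let $\mathcal G$ be the subspace consisting of those $A\in\mathbb N^{\mathbb N\times\mathbb N}$ that are the multiplication table of a group on the underlying set $\mathbb N$ whose identity element is $1$. For $G\in\mathcal G$, $\overline G$ denotes the group on $\mathbb N$ with multiplication table $G$. *)

theory Defs
  imports "HOL-Analysis.Analysis" "HOL-Algebra.Generated_Groups"
begin

definition Npos :: "nat set" where "Npos = {n. 1 \<le> n}"

definition table_space :: "(nat \<times> nat \<Rightarrow> nat) topology" where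
  "table_space = product_topology (\<lambda>_. discrete_topology Npos) (Npos \<times> Npos)"

definition table_monoid :: "(nat \<times> nat \<Rightarrow> nat) \<Rightarrow> nat monoid" where
  "table_monoid A = \<lparr>carrier = Npos, mult = (\<lambda>x y. A (x, y)), one = 1\<rparr>"

definition group_tables :: "(nat \<times> nat \<Rightarrow> nat) set" where
  "group_tables = {A \<in> topspace table_space. group (table_monoid A)}"

definition group_tables_top :: "(nat \<times> nat \<Rightarrow> nat) topology" where
  "group_tables_top = subtopology table_space group_tables"

definition finitely_generated_group :: "('a, 'b) monoid_scheme \<Rightarrow> bool" where
  "finitely_generated_group H \<longleftrightarrow> group H \<and>
     (\<exists>S. finite S \<and> S \<subseteq> carrier H \<and> generate H S = carrier H)"

definition embeddable :: "('a, 'b) monoid_scheme \<Rightarrow> ('c, 'd) monoid_scheme \<Rightarrow> bool" where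
  "embeddable H K \<longleftrightarrow> (\<exists>h. h \<in> hom H K \<and> inj_on h (carrier H))"

end

theory Submission
  imports Defs
begin

text \<open>Fix a finite generating set \<open>S\<close> of \<open>H\<close>. An embedding of \<open>H\<close> into a group is determined
  by the images of \<open>S\<close>, and an assignment \<open>g\<close> of elements to \<open>S\<close> extends to an embedding iff it
  is faithful: two words over \<open>S\<close> agree in \<open>H\<close> exactly when they agree after substituting \<open>g\<close>.
  The value of a fixed word at fixed generators depends on only finitely many entries of the
  multiplication table, so it is a locally constant function of the table. Hence each faithfulness
  condition is clopen, the tables on which a fixed \<open>g\<close> is faithful form a closed set, and
  \<open>\<E>\<^sub>H\<close> is the union of these closed sets over the countably many \<open>g \<in> \<nat>\<^sup>S\<close>.\<close>

lemma continuous_map_into_discrete_iff: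
  "continuous_map X (discrete_topology U) f \<longleftrightarrow>
     f \<in> topspace X \<rightarrow> U \<and> (\<forall>y\<in>U. openin X {x \<in> topspace X. f x = y})"
proof
  assume f: "continuous_map X (discrete_topology U) f"
  have "openin X {x \<in> topspace X. f x \<in> {y}}" if "y \<in> U" for y
    using f that by (intro openin_continuous_map_preimage) auto
  with f show "f \<in> topspace X \<rightarrow> U \<and> (\<forall>y\<in>U. openin X {x \<in> topspace X. f x = y})"
    by (auto simp: continuous_map_def)
next
  assume f: "f \<in> topspace X \<rightarrow> U \<and> (\<forall>y\<in>U. openin X {x \<in> topspace X. f x = y})"
  have "openin X {x \<in> topspace X. f x \<in> V}" if "V \<subseteq> U" for V
  proof -
    have "{x \<in> topspace X. f x \<in> V} = (\<Union>y\<in>V. {x \<in> topspace X. f x = y})"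
      by auto
    also have "openin X \<dots>"
      using f that by (intro openin_Union) auto
    finally show ?thesis .
  qed
  with f show "continuous_map X (discrete_topology U) f"
    by (simp add: continuous_map_def)
qed

lemma continuous_map_discrete_apply:
  assumes a: "continuous_map X (discrete_topology U) a"
    and F: "\<And>p. p \<in> U \<Longrightarrow> continuous_map X (discrete_topology V) (\<lambda>x. F x p)"
  shows "continuous_map X (discrete_topology V) (\<lambda>x. F x (a x))"
  unfolding continuous_map_into_discrete_iff
proof (intro conjI ballI)
  have a_range: "a x \<in> U" if "x \<in> topspace X" for x
    using a that by (auto simp: continuous_map_into_discrete_iff)
  with F show "(\<lambda>x. F x (a x)) \<in> topspace X \<rightarrow> V"
    by (auto simp: continuous_map_into_discrete_iff)
  fix y assume "y \<in> V"
  have "{x \<in> topspace X. F x (a x) = y} =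
        (\<Union>p\<in>U. {x \<in> topspace X. a x = p} \<inter> {x \<in> topspace X. F x p = y})"
    using a_range by auto
  moreover have "openin X ({x \<in> topspace X. a x = p} \<inter> {x \<in> topspace X. F x p = y})"
    if "p \<in> U" for p
    using a F[OF that] that \<open>y \<in> V\<close> by (auto simp: continuous_map_into_discrete_iff)
  ultimately show "openin X {x \<in> topspace X. F x (a x) = y}"
    by auto
qed

lemma closedin_discrete_preimage:
  assumes "continuous_map X (discrete_topology U) f"
  shows "closedin X {x \<in> topspace X. P (f x)}"
proof -
  have "closedin X {x \<in> topspace X. f x \<in> {y \<in> U. P y}}"
    using assms by (rule closedin_continuous_map_preimage) simp
  moreover have "{x \<in> topspace X. f x \<in> {y \<in> U. P y}} = {x \<in> topspace X. P (f x)}"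
    using assms by (auto simp: continuous_map_def)
  ultimately show ?thesis
    by simp
qed

lemma closedin_Collect_Ball:
  assumes "\<And>i. i \<in> I \<Longrightarrow> closedin X {x \<in> topspace X. P i x}"
  shows "closedin X {x \<in> topspace X. \<forall>i\<in>I. P i x}"
proof -
  have "{x \<in> topspace X. \<forall>i\<in>I. P i x} =
        \<Inter> (insert (topspace X) ((\<lambda>i. {x \<in> topspace X. P i x}) ` I))"
    by auto
  also have "closedin X \<dots>"
    by (rule closedin_Inter) (auto intro: assms)
  finally show ?thesis .
qed

datatype 'a group_word = WOne | WGen 'a | WInv 'a | WMul "'a group_word" "'a group_word"

primrec eval_word :: "('c, 'd) monoid_scheme \<Rightarrow> ('a \<Rightarrow> 'c) \<Rightarrow> 'a group_word \<Rightarrow> 'c" where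
  "eval_word M f WOne = \<one>\<^bsub>M\<^esub>"
| "eval_word M f (WGen s) = f s"
| "eval_word M f (WInv s) = inv\<^bsub>M\<^esub> (f s)"
| "eval_word M f (WMul u v) = eval_word M f u \<otimes>\<^bsub>M\<^esub> eval_word M f v"

definition words_over :: "'a set \<Rightarrow> 'a group_word set" where
  "words_over S = {w. set_group_word w \<subseteq> S}"

lemma eval_word_closed:
  assumes "group M" "f ` set_group_word w \<subseteq> carrier M"
  shows "eval_word M f w \<in> carrier M"
proof -
  interpret group M by fact
  show ?thesis using assms(2) by (induction w) auto
qed

lemma eval_word_cong:
  "(\<And>s. s \<in> set_group_word w \<Longrightarrow> f s = g s) \<Longrightarrow> eval_word M f w = eval_word M g w"
  by (induction w) auto

lemma hom_eval_word:
  assumes "group H" "group K" "h \<in> hom H K" "f ` set_group_word w \<subseteq> carrier H"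
  shows "h (eval_word H f w) = eval_word K (h \<circ> f) w"
proof -
  interpret group_hom H K h
    using assms(1-3) by (simp add: group_hom_def group_hom_axioms_def)
  show ?thesis
    using assms(4) by (induction w) (auto simp: eval_word_closed[OF assms(1)] image_Un)
qed

lemma generate_imp_eval_word:
  "x \<in> generate H S \<Longrightarrow> \<exists>w\<in>words_over S. eval_word H (\<lambda>x. x) w = x"
proof (induction rule: generate.induct)
  case one
  show ?case by (intro bexI[of _ WOne]) (simp_all add: words_over_def)
next
  case (incl h)
  then show ?case by (intro bexI[of _ "WGen h"]) (simp_all add: words_over_def)
next
  case (inv h)
  then show ?case by (intro bexI[of _ "WInv h"]) (simp_all add: words_over_def)
next
  case (eng h1 h2)
  then obtain u v where "u \<in> words_over S" "eval_word H (\<lambda>x. x) u = h1"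
    "v \<in> words_over S" "eval_word H (\<lambda>x. x) v = h2"
    by blast
  then show ?case by (intro bexI[of _ "WMul u v"]) (auto simp: words_over_def)
qed

definition faithful_assignment ::
    "('a, 'b) monoid_scheme \<Rightarrow> 'a set \<Rightarrow> ('c, 'd) monoid_scheme \<Rightarrow> ('a \<Rightarrow> 'c) \<Rightarrow> bool" where
  "faithful_assignment H S K g \<longleftrightarrow>
     (\<forall>u\<in>words_over S. \<forall>v\<in>words_over S.
        eval_word H (\<lambda>x. x) u = eval_word H (\<lambda>x. x) v \<longleftrightarrow> eval_word K g u = eval_word K g v)"

lemma faithful_assignmentD:
  "faithful_assignment H S K g \<Longrightarrow> u \<in> words_over S \<Longrightarrow> v \<in> words_over S \<Longrightarrow>
    eval_word H (\<lambda>x. x) u = eval_word H (\<lambda>x. x) v \<longleftrightarrow> eval_word K g u = eval_word K g v"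
  unfolding faithful_assignment_def by blast

lemma faithful_assignment_restrict_embedding:
  assumes "group H" "group K" "S \<subseteq> carrier H" "h \<in> hom H K" "inj_on h (carrier H)"
  shows "faithful_assignment H S K (restrict h S)"
  unfolding faithful_assignment_def
proof (intro ballI)
  fix u v assume u: "u \<in> words_over S" and v: "v \<in> words_over S"
  have closed: "eval_word H (\<lambda>x. x) w \<in> carrier H" if "w \<in> words_over S" for w
    using that assms(3) by (intro eval_word_closed[OF assms(1)]) (auto simp: words_over_def)
  have image: "h (eval_word H (\<lambda>x. x) w) = eval_word K (restrict h S) w" if "w \<in> words_over S" for w
  proof -
    have "h (eval_word H (\<lambda>x. x) w) = eval_word K h w"
      using hom_eval_word[OF assms(1,2,4), of "\<lambda>x. x" w] that assms(3)
      by (auto simp: words_over_def o_def)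
    also have "\<dots> = eval_word K (restrict h S) w"
      using that by (intro eval_word_cong) (auto simp: words_over_def)
    finally show ?thesis .
  qed
  show "eval_word H (\<lambda>x. x) u = eval_word H (\<lambda>x. x) v \<longleftrightarrow>
        eval_word K (restrict h S) u = eval_word K (restrict h S) v"
    using inj_on_eq_iff[OF assms(5) closed[OF u] closed[OF v]] image[OF u] image[OF v] by simp
qed

lemma faithful_assignment_imp_embeddable:
  assumes "group H" "group K" "generate H S = carrier H" "g ` S \<subseteq> carrier K"
    and faithful: "faithful_assignment H S K g"
  shows "embeddable H K"
proof -
  have "\<forall>x\<in>carrier H. \<exists>w. w \<in> words_over S \<and> eval_word H (\<lambda>x. x) w = x"
    using generate_imp_eval_word[of _ H S] unfolding assms(3) Bex_def by blast
  then obtain rep where "\<forall>x\<in>carrier H. rep x \<in> words_over S \<and> eval_word H (\<lambda>x. x) (rep x) = x"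
    by (rule bchoice[THEN exE])
  then have rep: "\<And>x. x \<in> carrier H \<Longrightarrow> rep x \<in> words_over S"
    and eval_rep: "\<And>x. x \<in> carrier H \<Longrightarrow> eval_word H (\<lambda>x. x) (rep x) = x"
    by auto
  define h where "h x = eval_word K g (rep x)" for x
  have h_eval: "h (eval_word H (\<lambda>x. x) w) = eval_word K g w"
    if "w \<in> words_over S" "eval_word H (\<lambda>x. x) w \<in> carrier H" for w
    using faithful_assignmentD[OF faithful rep[OF that(2)] that(1)] eval_rep[OF that(2)]
    by (simp add: h_def)
  have "h \<in> hom H K"
  proof (rule homI)
    fix x assume "x \<in> carrier H"
    then show "h x \<in> carrier K"
      using rep assms(4) unfolding h_def
      by (intro eval_word_closed[OF assms(2)]) (auto simp: words_over_def)
  next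
    fix x y assume x: "x \<in> carrier H" and y: "y \<in> carrier H"
    have "WMul (rep x) (rep y) \<in> words_over S"
      using rep[OF x] rep[OF y] by (simp add: words_over_def)
    moreover have "eval_word H (\<lambda>x. x) (WMul (rep x) (rep y)) = x \<otimes>\<^bsub>H\<^esub> y"
      by (simp add: eval_rep x y)
    moreover have "x \<otimes>\<^bsub>H\<^esub> y \<in> carrier H"
      using x y by (simp add: group.is_monoid[OF assms(1)] monoid.m_closed)
    ultimately have "h (x \<otimes>\<^bsub>H\<^esub> y) = eval_word K g (WMul (rep x) (rep y))"
      using h_eval by metis
    then show "h (x \<otimes>\<^bsub>H\<^esub> y) = h x \<otimes>\<^bsub>K\<^esub> h y"
      by (simp add: h_def)
  qed
  moreover have "inj_on h (carrier H)"
  proof (rule inj_onI)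
    fix x y assume x: "x \<in> carrier H" and y: "y \<in> carrier H" and "h x = h y"
    then have "eval_word H (\<lambda>x. x) (rep x) = eval_word H (\<lambda>x. x) (rep y)"
      using faithful_assignmentD[OF faithful rep[OF x] rep[OF y]] by (simp add: h_def)
    then show "x = y" by (simp add: eval_rep x y)
  qed
  ultimately show ?thesis unfolding embeddable_def by blast
qed

lemma embeddable_iff_faithful_assignment:
  assumes "group H" "group K" "S \<subseteq> carrier H" "generate H S = carrier H"
  shows "embeddable H K \<longleftrightarrow> (\<exists>g\<in>S \<rightarrow>\<^sub>E carrier K. faithful_assignment H S K g)"
proof
  assume "embeddable H K"
  then obtain h where h: "h \<in> hom H K" "inj_on h (carrier H)"
    unfolding embeddable_def by blast
  then have "restrict h S \<in> S \<rightarrow>\<^sub>E carrier K"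
    using assms(3) by (auto simp: hom_def)
  with faithful_assignment_restrict_embedding[OF assms(1-3) h]
  show "\<exists>g\<in>S \<rightarrow>\<^sub>E carrier K. faithful_assignment H S K g"
    by blast
next
  assume "\<exists>g\<in>S \<rightarrow>\<^sub>E carrier K. faithful_assignment H S K g"
  then show "embeddable H K"
    using faithful_assignment_imp_embeddable[OF assms(1,2,4)] by (auto simp: PiE_def Pi_def)
qed

lemma topspace_group_tables_top [simp]: "topspace group_tables_top = group_tables"
  by (auto simp: group_tables_top_def group_tables_def)

lemma table_monoid_simps [simp]:
  "carrier (table_monoid G) = Npos"
  "x \<otimes>\<^bsub>table_monoid G\<^esub> y = G (x, y)"
  "\<one>\<^bsub>table_monoid G\<^esub> = 1"
  by (simp_all add: table_monoid_def)

lemma continuous_map_table_entry: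
  assumes "p \<in> Npos \<times> Npos"
  shows "continuous_map group_tables_top (discrete_topology Npos) (\<lambda>G. G p)"
  unfolding group_tables_top_def table_space_def
  using continuous_map_product_projection[OF assms] by (rule continuous_map_from_subtopology)

lemma continuous_map_table_inv:
  assumes x: "x \<in> Npos"
  shows "continuous_map group_tables_top (discrete_topology Npos) (\<lambda>G. inv\<^bsub>table_monoid G\<^esub> x)"
  unfolding continuous_map_into_discrete_iff
proof (intro conjI ballI)
  show "(\<lambda>G. inv\<^bsub>table_monoid G\<^esub> x) \<in> topspace group_tables_top \<rightarrow> Npos"
    using x group.inv_closed by (fastforce simp: group_tables_def)
  fix y assume y: "y \<in> Npos"
  have "{G \<in> group_tables. inv\<^bsub>table_monoid G\<^esub> x = y} = {G \<in> group_tables. G (y, x) \<in> {1}}"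
    using x y group.inv_equality group.l_inv by (fastforce simp: group_tables_def)
  moreover have "openin group_tables_top {G \<in> topspace group_tables_top. G (y, x) \<in> {1}}"
    using x y by (intro openin_continuous_map_preimage[OF continuous_map_table_entry])
      (auto simp: Npos_def)
  ultimately show "openin group_tables_top
      {G \<in> topspace group_tables_top. inv\<^bsub>table_monoid G\<^esub> x = y}"
    by simp
qed

lemma continuous_map_table_eval_word:
  assumes "g ` set_group_word w \<subseteq> Npos"
  shows "continuous_map group_tables_top (discrete_topology Npos)
           (\<lambda>G. eval_word (table_monoid G) g w)"
  using assms
proof (induction w)
  case WOne
  then show ?case by (simp add: Npos_def)
next
  case (WGen s)
  then show ?case by simp
next
  case (WInv s)
  then show ?case by (simp add: continuous_map_table_inv)
next
  case (WMul u v)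
  then have "continuous_map group_tables_top (discrete_topology (Npos \<times> Npos))
      (\<lambda>G. (eval_word (table_monoid G) g u, eval_word (table_monoid G) g v))"
    by (auto simp: prod_topology_discrete_topology image_Un intro: continuous_map_pairedI)
  then have "continuous_map group_tables_top (discrete_topology Npos)
      (\<lambda>G. G (eval_word (table_monoid G) g u, eval_word (table_monoid G) g v))"
    by (rule continuous_map_discrete_apply[where F = "\<lambda>G p. G p"])
      (rule continuous_map_table_entry)
  then show ?case
    by simp
qed

lemma closedin_faithful_tables:
  assumes "g ` S \<subseteq> Npos"
  shows "closedin group_tables_top {G \<in> group_tables. faithful_assignment H S (table_monoid G) g}"
proof -
  have "closedin group_tables_top {G \<in> group_tables.
          eval_word H (\<lambda>x. x) u = eval_word H (\<lambda>x. x) v \<longleftrightarrow>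
          eval_word (table_monoid G) g u = eval_word (table_monoid G) g v}"
    if "u \<in> words_over S" "v \<in> words_over S" for u v
  proof -
    have "continuous_map group_tables_top (discrete_topology (Npos \<times> Npos))
        (\<lambda>G. (eval_word (table_monoid G) g u, eval_word (table_monoid G) g v))"
      using that assms
      by (auto simp: prod_topology_discrete_topology words_over_def
               intro!: continuous_map_pairedI continuous_map_table_eval_word)
    from closedin_discrete_preimage[OF this,
        where P = "\<lambda>(a, b). eval_word H (\<lambda>x. x) u = eval_word H (\<lambda>x. x) v \<longleftrightarrow> a = b"]
    show ?thesis by simp
  qed
  then show ?thesis
    unfolding faithful_assignment_def
    by (intro closedin_Collect_Ball[where X = group_tables_top, simplified]) auto
qed

theorem lemma7p4:
  fixes H :: "('a, 'b) monoid_scheme"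
  assumes "finitely_generated_group H"
  shows "fsigma_in group_tables_top {G \<in> group_tables. embeddable H (table_monoid G)}"
proof -
  obtain S where H: "group H" and S: "finite S" "S \<subseteq> carrier H" "generate H S = carrier H"
    using assms unfolding finitely_generated_group_def by blast
  have "embeddable H (table_monoid G) \<longleftrightarrow>
        (\<exists>g\<in>S \<rightarrow>\<^sub>E Npos. faithful_assignment H S (table_monoid G) g)" if "G \<in> group_tables" for G
    using embeddable_iff_faithful_assignment[OF H _ S(2,3), of "table_monoid G"] that
    by (simp add: group_tables_def)
  then have "{G \<in> group_tables. embeddable H (table_monoid G)} =
        (\<Union>g\<in>S \<rightarrow>\<^sub>E Npos. {G \<in> group_tables. faithful_assignment H S (table_monoid G) g})"
    by blast
  also have "fsigma_in group_tables_top \<dots>"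
  proof (rule fsigma_in_Union)
    show "countable ((\<lambda>g. {G \<in> group_tables. faithful_assignment H S (table_monoid G) g})
                       ` (S \<rightarrow>\<^sub>E Npos))"
      using S(1) by (intro countable_image countable_PiE) auto
  qed (auto intro!: closed_imp_fsigma_in closedin_faithful_tables)
  finally show ?thesis .
qed

end
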